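(* Let $\mathbb{B}$ be a category with finite limits, in which every morphism is regarded as small, and let $\mathbf{C}=(C_0,C_1,d_0,d_1,c,i)$ be an internal category in $\mathbb{B}$. Then the externalization $\mathbf{proj}:\mathrm{Fam}(\mathbf{C})\to\mathbb{B}$ is a concrete fibration over $\mathbb{B}$.
   Context: An internal category consists of objects $C_0,C_1$, domain/codomain $d_0,d_1:C_1\to C_0$, composition $c:C_1\times_{C_0}C_1\to C_1$, identity $i:C_0\to C_1$ satisfying the usual axioms. $\mathrm{Fam}(\mathbf{C})$ has objects $(I,X)$ with $X:I\to C_0$, morphisms $(u,f):(I,X)\to(J,Y)$ with $u:I\to J$, $f:I\to C_1$, $d_0f=X$, $d_1f=Yu$, composition $(v,g)\circ(u,f)=(vu,c\circ\langle gu,f\rangle)$, identities $(\mathrm{id}_I,iX)$; $\mathbf{proj}(I,X)=I$ is a fibration (the externalization). A concrete fibration over $\mathbb{B}$ is a fibration $P:\mathbb{X}\to\mathbb{B}$ together with a faithful fibered functor $U$ over $\mathbb{B}$ from $P$ to the codomain fibration $\mathbf{cod}:\mathbb{B}^{\to}\to\mathbb{B}$ (so $U$ commutes with the projections to $\mathbb{B}$ and preserves cartesian morphisms), such that for every object $X$, $UX$ is a small morphism $|X|\to PX$, and $U$ sends each $f:X\to Y$ to a commuting square with top $|f|:|X|\to|Y|$ and bottom $Pf$. *)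

theory Defs
  imports Main
begin

record ('o, 'm) category =
  cat_obj  :: "'o set"
  cat_arr  :: "'m set"
  cat_dom  :: "'m \<Rightarrow> 'o"
  cat_cod  :: "'m \<Rightarrow> 'o"
  cat_id   :: "'o \<Rightarrow> 'm"
  cat_comp :: "'m \<Rightarrow> 'm \<Rightarrow> 'm"   (* cat_comp C g f = g o f *)

definition hom :: "('o, 'm) category \<Rightarrow> 'o \<Rightarrow> 'o \<Rightarrow> 'm set" where
  "hom C x y = {f \<in> cat_arr C. cat_dom C f = x \<and> cat_cod C f = y}"

definition is_category :: "('o, 'm) category \<Rightarrow> bool" where
  "is_category C \<longleftrightarrow>
     (\<forall>f \<in> cat_arr C. cat_dom C f \<in> cat_obj C \<and> cat_cod C f \<in> cat_obj C) \<and>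
     (\<forall>x \<in> cat_obj C. cat_id C x \<in> hom C x x) \<and>
     (\<forall>f \<in> cat_arr C. \<forall>g \<in> cat_arr C. cat_cod C f = cat_dom C g \<longrightarrow>
        cat_comp C g f \<in> hom C (cat_dom C f) (cat_cod C g)) \<and>
     (\<forall>f \<in> cat_arr C. cat_comp C (cat_id C (cat_cod C f)) f = f \<and>
                       cat_comp C f (cat_id C (cat_dom C f)) = f) \<and>
     (\<forall>f \<in> cat_arr C. \<forall>g \<in> cat_arr C. \<forall>h \<in> cat_arr C.
        cat_cod C f = cat_dom C g \<longrightarrow> cat_cod C g = cat_dom C h \<longrightarrow>
        cat_comp C h (cat_comp C g f) = cat_comp C (cat_comp C h g) f)"

definition is_terminal :: "('o, 'm) category \<Rightarrow> 'o \<Rightarrow> bool" where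
  "is_terminal C t \<longleftrightarrow> t \<in> cat_obj C \<and> (\<forall>x \<in> cat_obj C. \<exists>!f. f \<in> hom C x t)"

definition is_pullback :: "('o, 'm) category \<Rightarrow> 'm \<Rightarrow> 'm \<Rightarrow> 'm \<Rightarrow> 'm \<Rightarrow> bool" where
  "is_pullback C f g p q \<longleftrightarrow>
     f \<in> cat_arr C \<and> g \<in> cat_arr C \<and> p \<in> cat_arr C \<and> q \<in> cat_arr C \<and>
     cat_cod C f = cat_cod C g \<and> cat_dom C p = cat_dom C q \<and>
     cat_cod C p = cat_dom C f \<and> cat_cod C q = cat_dom C g \<and>
     cat_comp C f p = cat_comp C g q \<and>
     (\<forall>a \<in> cat_arr C. \<forall>b \<in> cat_arr C.
        cat_dom C a = cat_dom C b \<longrightarrow> cat_cod C a = cat_dom C f \<longrightarrow>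
        cat_cod C b = cat_dom C g \<longrightarrow> cat_comp C f a = cat_comp C g b \<longrightarrow>
        (\<exists>!h. h \<in> hom C (cat_dom C a) (cat_dom C p) \<and>
              cat_comp C p h = a \<and> cat_comp C q h = b))"

definition has_finite_limits :: "('o, 'm) category \<Rightarrow> bool" where
  "has_finite_limits C \<longleftrightarrow>
     (\<exists>t. is_terminal C t) \<and>
     (\<forall>f \<in> cat_arr C. \<forall>g \<in> cat_arr C. cat_cod C f = cat_cod C g \<longrightarrow>
        (\<exists>p q. is_pullback C f g p q))"

definition is_functor ::
  "('a, 'b) category \<Rightarrow> ('c, 'd) category \<Rightarrow> ('a \<Rightarrow> 'c) \<Rightarrow> ('b \<Rightarrow> 'd) \<Rightarrow> bool" where
  "is_functor A B Fo Fm \<longleftrightarrow>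
     is_category A \<and> is_category B \<and>
     (\<forall>x \<in> cat_obj A. Fo x \<in> cat_obj B) \<and>
     (\<forall>f \<in> cat_arr A. Fm f \<in> hom B (Fo (cat_dom A f)) (Fo (cat_cod A f))) \<and>
     (\<forall>x \<in> cat_obj A. Fm (cat_id A x) = cat_id B (Fo x)) \<and>
     (\<forall>f \<in> cat_arr A. \<forall>g \<in> cat_arr A. cat_cod A f = cat_dom A g \<longrightarrow>
        Fm (cat_comp A g f) = cat_comp B (Fm g) (Fm f))"

definition faithful ::
  "('a, 'b) category \<Rightarrow> ('b \<Rightarrow> 'd) \<Rightarrow> bool" where
  "faithful A Fm \<longleftrightarrow>
     (\<forall>f \<in> cat_arr A. \<forall>g \<in> cat_arr A.
        cat_dom A f = cat_dom A g \<longrightarrow> cat_cod A f = cat_cod A g \<longrightarrow> Fm f = Fm g \<longrightarrow> f = g)"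

definition is_cartesian ::
  "('a, 'b) category \<Rightarrow> ('c, 'd) category \<Rightarrow> ('a \<Rightarrow> 'c) \<Rightarrow> ('b \<Rightarrow> 'd) \<Rightarrow> 'b \<Rightarrow> bool" where
  "is_cartesian A B Po Pm f \<longleftrightarrow>
     f \<in> cat_arr A \<and>
     (\<forall>g \<in> cat_arr A. cat_cod A g = cat_cod A f \<longrightarrow>
       (\<forall>w \<in> hom B (Po (cat_dom A g)) (Po (cat_dom A f)).
          cat_comp B (Pm f) w = Pm g \<longrightarrow>
          (\<exists>!h. h \<in> hom A (cat_dom A g) (cat_dom A f) \<and> Pm h = w \<and> cat_comp A f h = g)))"

definition is_fibration ::
  "('a, 'b) category \<Rightarrow> ('c, 'd) category \<Rightarrow> ('a \<Rightarrow> 'c) \<Rightarrow> ('b \<Rightarrow> 'd) \<Rightarrow> bool" where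
  "is_fibration A B Po Pm \<longleftrightarrow>
     is_functor A B Po Pm \<and>
     (\<forall>Y \<in> cat_obj A. \<forall>u \<in> cat_arr B. cat_cod B u = Po Y \<longrightarrow>
        (\<exists>f \<in> cat_arr A. cat_cod A f = Y \<and> Pm f = u \<and> is_cartesian A B Po Pm f))"

text \<open>Objects: arrows of B. A morphism a -> a' is (a, (t, b), a') with a' o t = b o a
  (t = top, b = bottom).\<close>
definition arrow_cat :: "('o, 'm) category \<Rightarrow> ('m, 'm \<times> ('m \<times> 'm) \<times> 'm) category" where
  "arrow_cat B = \<lparr>
     cat_obj = cat_arr B,
     cat_arr = {(a, (t, b), a') | a t b a'. a \<in> cat_arr B \<and> a' \<in> cat_arr B \<and>
                  t \<in> hom B (cat_dom B a) (cat_dom B a') \<and>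
                  b \<in> hom B (cat_cod B a) (cat_cod B a') \<and>
                  cat_comp B a' t = cat_comp B b a},
     cat_dom = (\<lambda>(a, _, _). a),
     cat_cod = (\<lambda>(_, _, a'). a'),
     cat_id = (\<lambda>a. (a, (cat_id B (cat_dom B a), cat_id B (cat_cod B a)), a)),
     cat_comp = (\<lambda>(_, (t', b'), a'') (a, (t, b), _).
                   (a, (cat_comp B t' t, cat_comp B b' b), a'')) \<rparr>"

definition cod_obj :: "('o, 'm) category \<Rightarrow> 'm \<Rightarrow> 'o" where
  "cod_obj B a = cat_cod B a"

definition cod_arr :: "'m \<times> ('m \<times> 'm) \<times> 'm \<Rightarrow> 'm" where
  "cod_arr s = (case s of (_, (_, b), _) \<Rightarrow> b)"

definition top_arr :: "'m \<times> ('m \<times> 'm) \<times> 'm \<Rightarrow> 'm" where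
  "top_arr s = (case s of (_, (t, _), _) \<Rightarrow> t)"

text \<open>P = (Po, Pm) : X -> B is a concrete fibration (w.r.t. the class of small morphisms
  given by the predicate small) if it is a fibration and there is a faithful fibered functor
  U = (Uo, Um) : X -> B^-> over B (cod o U = P, U preserves cartesian arrows) such that
  each U x is small; U x is then a morphism |x| -> P x and U f is the square with top |f|
  and bottom P f.\<close>
definition is_concrete_fibration ::
  "('o, 'm) category \<Rightarrow> ('m \<Rightarrow> bool) \<Rightarrow> ('x, 'y) category \<Rightarrow> ('x \<Rightarrow> 'o) \<Rightarrow> ('y \<Rightarrow> 'm) \<Rightarrow> bool" where
  "is_concrete_fibration B small X Po Pm \<longleftrightarrow>
     is_fibration X B Po Pm \<and>
     (\<exists>(Uo :: 'x \<Rightarrow> 'm) (Um :: 'y \<Rightarrow> 'm \<times> ('m \<times> 'm) \<times> 'm).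
        is_functor X (arrow_cat B) Uo Um \<and>
        faithful X Um \<and>
        (\<forall>x \<in> cat_obj X. cod_obj B (Uo x) = Po x \<and> small (Uo x)) \<and>
        (\<forall>f \<in> cat_arr X. cod_arr (Um f) = Pm f) \<and>
        (\<forall>f \<in> cat_arr X. is_cartesian X B Po Pm f \<longrightarrow>
            is_cartesian (arrow_cat B) B (cod_obj B) cod_arr (Um f)))"

text \<open>C2 together with pi1, pi2 is a (chosen) pullback C1 x_{C0} C1 of d0 (first factor) and
  d1 (second factor): a pair (g, f) is composable when d0 g = d1 f, composite c(g,f) = g o f.\<close>
record ('o, 'm) internal_cat =
  IC0 :: 'o
  IC1 :: 'o
  Id0 :: 'm
  Id1 :: 'm
  Icomp :: 'm
  Iident :: 'm
  IC2 :: 'o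
  Ipi1 :: 'm
  Ipi2 :: 'm

definition ic_pair :: "('o, 'm) category \<Rightarrow> ('o, 'm) internal_cat \<Rightarrow> 'm \<Rightarrow> 'm \<Rightarrow> 'm" where
  "ic_pair B C g f = (THE h. h \<in> hom B (cat_dom B f) (IC2 C) \<and>
                            cat_comp B (Ipi1 C) h = g \<and> cat_comp B (Ipi2 C) h = f)"

text \<open>The composite of generalized elements g, f : I -> C1 with d0 g = d1 f.\<close>
definition ic_mult :: "('o, 'm) category \<Rightarrow> ('o, 'm) internal_cat \<Rightarrow> 'm \<Rightarrow> 'm \<Rightarrow> 'm" where
  "ic_mult B C g f = cat_comp B (Icomp C) (ic_pair B C g f)"

definition is_internal_category :: "('o, 'm) category \<Rightarrow> ('o, 'm) internal_cat \<Rightarrow> bool" where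
  "is_internal_category B C \<longleftrightarrow>
     is_category B \<and>
     IC0 C \<in> cat_obj B \<and> IC1 C \<in> cat_obj B \<and>
     Id0 C \<in> hom B (IC1 C) (IC0 C) \<and> Id1 C \<in> hom B (IC1 C) (IC0 C) \<and>
     Iident C \<in> hom B (IC0 C) (IC1 C) \<and>
     is_pullback B (Id0 C) (Id1 C) (Ipi1 C) (Ipi2 C) \<and> cat_dom B (Ipi1 C) = IC2 C \<and>
     Icomp C \<in> hom B (IC2 C) (IC1 C) \<and>
     cat_comp B (Id0 C) (Iident C) = cat_id B (IC0 C) \<and>
     cat_comp B (Id1 C) (Iident C) = cat_id B (IC0 C) \<and>
     cat_comp B (Id0 C) (Icomp C) = cat_comp B (Id0 C) (Ipi2 C) \<and>
     cat_comp B (Id1 C) (Icomp C) = cat_comp B (Id1 C) (Ipi1 C) \<and>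
     (\<forall>f \<in> cat_arr B. cat_cod B f = IC1 C \<longrightarrow>
        ic_mult B C (cat_comp B (Iident C) (cat_comp B (Id1 C) f)) f = f \<and>
        ic_mult B C f (cat_comp B (Iident C) (cat_comp B (Id0 C) f)) = f) \<and>
     (\<forall>f \<in> cat_arr B. \<forall>g \<in> cat_arr B. \<forall>h \<in> cat_arr B.
        cat_cod B f = IC1 C \<longrightarrow> cat_cod B g = IC1 C \<longrightarrow> cat_cod B h = IC1 C \<longrightarrow>
        cat_dom B f = cat_dom B g \<longrightarrow> cat_dom B g = cat_dom B h \<longrightarrow>
        cat_comp B (Id0 C) g = cat_comp B (Id1 C) f \<longrightarrow>
        cat_comp B (Id0 C) h = cat_comp B (Id1 C) g \<longrightarrow>
        ic_mult B C (ic_mult B C h g) f = ic_mult B C h (ic_mult B C g f))"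

definition Fam :: "('o, 'm) category \<Rightarrow> ('o, 'm) internal_cat \<Rightarrow>
    ('o \<times> 'm, ('o \<times> 'm) \<times> ('m \<times> 'm) \<times> ('o \<times> 'm)) category" where
  "Fam B C = \<lparr>
     cat_obj = {(I, X). I \<in> cat_obj B \<and> X \<in> hom B I (IC0 C)},
     cat_arr = {((I, X), (u, f), (J, Y)) | I X u f J Y.
                  I \<in> cat_obj B \<and> X \<in> hom B I (IC0 C) \<and>
                  J \<in> cat_obj B \<and> Y \<in> hom B J (IC0 C) \<and>
                  u \<in> hom B I J \<and> f \<in> hom B I (IC1 C) \<and>
                  cat_comp B (Id0 C) f = X \<and> cat_comp B (Id1 C) f = cat_comp B Y u},
     cat_dom = (\<lambda>(S, _, _). S),
     cat_cod = (\<lambda>(_, _, T). T),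
     cat_id = (\<lambda>(I, X). ((I, X), (cat_id B I, cat_comp B (Iident C) X), (I, X))),
     cat_comp = (\<lambda>(_, (v, g), T) (S, (u, f), _).
                   (S, (cat_comp B v u, ic_mult B C (cat_comp B g u) f), T)) \<rparr>"

definition proj_obj :: "'o \<times> 'm \<Rightarrow> 'o" where
  "proj_obj S = fst S"

definition proj_arr :: "('o \<times> 'm) \<times> ('m \<times> 'm) \<times> ('o \<times> 'm) \<Rightarrow> 'm" where
  "proj_arr F = (case F of (_, (u, _), _) \<Rightarrow> u)"

end

theory Submission
  imports Defs
begin

text \<open>Over a family \<open>(I, X)\<close> lies the object \<open>|(I, X)| = I \<times>\<^sub>C\<^sub>0 C1\<close> of pairs \<open>(i, a)\<close> with
  \<open>d1 a = X i\<close>, i.e. the arrows of \<open>C\<close> into the objects of the family; the faithful functor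
  \<open>U\<close> sends \<open>(I, X)\<close> to the projection \<open>|(I, X)| \<rightarrow> I\<close> and \<open>(u, f)\<close> to the square with top
  \<open>(i, a) \<mapsto> (u i, f i \<circ> a)\<close>. It is faithful because \<open>f i\<close> can be read off the image of
  \<open>(i, id (X i))\<close>.
  The projection is a fibration with cartesian lifts \<open>(u, id \<circ> Y \<circ> u) : (I, Y \<circ> u) \<rightarrow> (J, Y)\<close>,
  and comparing with these shows that a cartesian \<open>(u, f)\<close> has every \<open>f i\<close> invertible. Then the
  top map of \<open>U (u, f)\<close> is a bijection on fibres, so \<open>U (u, f)\<close> is a pullback square, and
  pullback squares are cartesian for the codomain fibration.\<close>

lemma is_cartesianD:
  assumes "is_cartesian A B Po Pm f" "g \<in> cat_arr A" "cat_cod A g = cat_cod A f"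
    and "w \<in> hom B (Po (cat_dom A g)) (Po (cat_dom A f))" "cat_comp B (Pm f) w = Pm g"
  shows "\<exists>!h. h \<in> hom A (cat_dom A g) (cat_dom A f) \<and> Pm h = w \<and> cat_comp A f h = g"
  using assms unfolding is_cartesian_def by blast

locale ambient_category =
  fixes B :: "('o, 'm) category"
  assumes category: "is_category B"
begin

abbreviation comp_B (infixl "\<cdot>" 70) where "g \<cdot> f \<equiv> cat_comp B g f"
abbreviation "Ar \<equiv> cat_arr B"
abbreviation "Ob \<equiv> cat_obj B"
abbreviation "dm \<equiv> cat_dom B"
abbreviation "cd \<equiv> cat_cod B"
abbreviation "ide \<equiv> cat_id B"
abbreviation "Hom \<equiv> hom B"

lemma dom_obj: "f \<in> Ar \<Longrightarrow> dm f \<in> Ob"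
  using category unfolding is_category_def by blast

lemma cod_obj_arr: "f \<in> Ar \<Longrightarrow> cd f \<in> Ob"
  using category unfolding is_category_def by blast

lemma comp_arr: "f \<in> Ar \<Longrightarrow> g \<in> Ar \<Longrightarrow> cd f = dm g \<Longrightarrow> g \<cdot> f \<in> Ar"
  using category unfolding is_category_def hom_def by blast

lemma dom_comp: "f \<in> Ar \<Longrightarrow> g \<in> Ar \<Longrightarrow> cd f = dm g \<Longrightarrow> dm (g \<cdot> f) = dm f"
  using category unfolding is_category_def hom_def by blast

lemma cod_comp: "f \<in> Ar \<Longrightarrow> g \<in> Ar \<Longrightarrow> cd f = dm g \<Longrightarrow> cd (g \<cdot> f) = cd g"
  using category unfolding is_category_def hom_def by blast

lemma comp_assoc:
  "f \<in> Ar \<Longrightarrow> g \<in> Ar \<Longrightarrow> h \<in> Ar \<Longrightarrow> cd f = dm g \<Longrightarrow> cd g = dm h \<Longrightarrow>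
   h \<cdot> (g \<cdot> f) = (h \<cdot> g) \<cdot> f"
  using category unfolding is_category_def by blast

lemma id_arr: "x \<in> Ob \<Longrightarrow> ide x \<in> Ar"
  using category unfolding is_category_def hom_def by blast

lemma dom_id: "x \<in> Ob \<Longrightarrow> dm (ide x) = x"
  using category unfolding is_category_def hom_def by blast

lemma cod_id: "x \<in> Ob \<Longrightarrow> cd (ide x) = x"
  using category unfolding is_category_def hom_def by blast

lemma comp_id_left: "f \<in> Ar \<Longrightarrow> cd f = y \<Longrightarrow> ide y \<cdot> f = f"
  using category unfolding is_category_def by blast

lemma comp_id_right: "f \<in> Ar \<Longrightarrow> dm f = y \<Longrightarrow> f \<cdot> ide y = f"
  using category unfolding is_category_def by blast

lemmas arr_simps = comp_arr dom_comp cod_comp id_arr dom_id cod_id comp_id_left comp_id_right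
  dom_obj cod_obj_arr

section \<open>Pullbacks and the codomain fibration\<close>

lemma pullbackD:
  assumes "is_pullback B f g p q"
  shows "p \<in> Ar" "q \<in> Ar" "dm q = dm p" "cd p = dm f" "cd q = dm g" "f \<cdot> p = g \<cdot> q"
  using assms unfolding is_pullback_def by auto

lemma pullback_ex1:
  "is_pullback B f g p q \<Longrightarrow> a \<in> Ar \<Longrightarrow> b \<in> Ar \<Longrightarrow> dm a = dm b \<Longrightarrow> cd a = dm f \<Longrightarrow>
   cd b = dm g \<Longrightarrow> f \<cdot> a = g \<cdot> b \<Longrightarrow> \<exists>!h. h \<in> Hom (dm a) (dm p) \<and> p \<cdot> h = a \<and> q \<cdot> h = b"
  unfolding is_pullback_def by blast

lemma pullback_arr_eqI:
  assumes pb: "is_pullback B f g p q"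
    and h: "h \<in> Ar" "h' \<in> Ar" "dm h = dm h'" "cd h = dm p" "cd h' = dm p"
    and eq: "p \<cdot> h = p \<cdot> h'" "q \<cdot> h = q \<cdot> h'"
  shows "h = h'"
proof -
  note P = pullbackD[OF pb]
  have fg: "f \<in> Ar" "g \<in> Ar" using pb unfolding is_pullback_def by auto
  have "f \<cdot> (p \<cdot> h) = (f \<cdot> p) \<cdot> h" using P fg h by (simp add: comp_assoc)
  also have "\<dots> = g \<cdot> (q \<cdot> h)" using P fg h by (simp add: comp_assoc)
  finally have "f \<cdot> (p \<cdot> h) = g \<cdot> (q \<cdot> h)" .
  then have "\<exists>!k. k \<in> Hom (dm (p \<cdot> h)) (dm p) \<and> p \<cdot> k = p \<cdot> h \<and> q \<cdot> k = q \<cdot> h"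
    by (intro pullback_ex1[OF pb]) (use P fg h in \<open>simp_all add: arr_simps\<close>)
  moreover have "h \<in> Hom (dm (p \<cdot> h)) (dm p)" "h' \<in> Hom (dm (p \<cdot> h)) (dm p)"
    using P h by (simp_all add: hom_def arr_simps)
  ultimately show ?thesis using eq by metis
qed

definition pb_lift :: "'m \<Rightarrow> 'm \<Rightarrow> 'm \<Rightarrow> 'm \<Rightarrow> 'm" where
  "pb_lift p q a b = (THE h. h \<in> Hom (dm a) (dm p) \<and> p \<cdot> h = a \<and> q \<cdot> h = b)"

lemma pb_lift:
  assumes "is_pullback B f g p q" "a \<in> Ar" "b \<in> Ar" "dm a = dm b" "cd a = dm f" "cd b = dm g"
    "f \<cdot> a = g \<cdot> b"
  shows "pb_lift p q a b \<in> Ar" "dm (pb_lift p q a b) = dm a" "cd (pb_lift p q a b) = dm p"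
    "p \<cdot> pb_lift p q a b = a" "q \<cdot> pb_lift p q a b = b"
  using theI'[OF pullback_ex1[OF assms]] unfolding pb_lift_def hom_def by simp_all

abbreviation "Bto \<equiv> arrow_cat B"

lemma arrow_cat_arr_iff:
  "(a, (t, b), a') \<in> cat_arr Bto \<longleftrightarrow>
     a \<in> Ar \<and> a' \<in> Ar \<and> t \<in> Ar \<and> dm t = dm a \<and> cd t = dm a' \<and>
     b \<in> Ar \<and> dm b = cd a \<and> cd b = cd a' \<and> a' \<cdot> t = b \<cdot> a"
  unfolding arrow_cat_def hom_def by auto

lemma arrow_cat_arrE:
  assumes "G \<in> cat_arr Bto"
  obtains a t b a' where "G = (a, (t, b), a')" "a \<in> Ar" "a' \<in> Ar" "t \<in> Ar" "dm t = dm a"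
    "cd t = dm a'" "b \<in> Ar" "dm b = cd a" "cd b = cd a'" "a' \<cdot> t = b \<cdot> a"
  using assms unfolding arrow_cat_def hom_def by auto

lemma arrow_cat_simps [simp]:
  "cat_obj Bto = Ar" "cat_dom Bto (a, x, a') = a" "cat_cod Bto (a, x, a') = a'"
  "cat_id Bto a = (a, (ide (dm a), ide (cd a)), a)"
  "cat_comp Bto (a', (t', b'), a'') (a, (t, b), a0) = (a, (t' \<cdot> t, b' \<cdot> b), a'')"
  unfolding arrow_cat_def by simp_all

lemma cod_fibration_simps [simp]: "cod_obj B a = cd a" "cod_arr (a, (t, b), a') = b"
  by (simp_all add: cod_obj_def cod_arr_def)

lemma is_category_arrow_cat: "is_category Bto"
  unfolding is_category_def
proof (intro conjI ballI impI)
  fix F assume "F \<in> cat_arr Bto"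
  then show "cat_dom Bto F \<in> cat_obj Bto" "cat_cod Bto F \<in> cat_obj Bto"
    by (auto elim!: arrow_cat_arrE)
next
  fix a assume "a \<in> cat_obj Bto"
  then show "cat_id Bto a \<in> hom Bto a a"
    by (simp add: hom_def arrow_cat_arr_iff arr_simps)
next
  fix F G assume F: "F \<in> cat_arr Bto" and G: "G \<in> cat_arr Bto"
    and FG: "cat_cod Bto F = cat_dom Bto G"
  from F obtain a t b a' where F': "F = (a, (t, b), a')" "a \<in> Ar" "a' \<in> Ar" "t \<in> Ar"
    "dm t = dm a" "cd t = dm a'" "b \<in> Ar" "dm b = cd a" "cd b = cd a'" "a' \<cdot> t = b \<cdot> a"
    by (rule arrow_cat_arrE)
  from G FG F' obtain t' b' a'' where G': "G = (a', (t', b'), a'')" "a'' \<in> Ar" "t' \<in> Ar"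
    "dm t' = dm a'" "cd t' = dm a''" "b' \<in> Ar" "dm b' = cd a'" "cd b' = cd a''"
    "a'' \<cdot> t' = b' \<cdot> a'"
    by (auto elim!: arrow_cat_arrE)
  have "a'' \<cdot> (t' \<cdot> t) = (b' \<cdot> a') \<cdot> t" using F' G' by (simp add: comp_assoc)
  also have "\<dots> = (b' \<cdot> b) \<cdot> a" using F' G' by (simp add: comp_assoc[symmetric])
  finally show "cat_comp Bto G F \<in> hom Bto (cat_dom Bto F) (cat_cod Bto G)"
    using F' G' by (simp add: hom_def arrow_cat_arr_iff arr_simps)
next
  fix F assume "F \<in> cat_arr Bto"
  then show "cat_comp Bto (cat_id Bto (cat_cod Bto F)) F = F"
    "cat_comp Bto F (cat_id Bto (cat_dom Bto F)) = F"
    by (auto elim!: arrow_cat_arrE simp: arr_simps)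
next
  fix F G H assume "F \<in> cat_arr Bto" "G \<in> cat_arr Bto" "H \<in> cat_arr Bto"
    "cat_cod Bto F = cat_dom Bto G" "cat_cod Bto G = cat_dom Bto H"
  then show "cat_comp Bto H (cat_comp Bto G F) = cat_comp Bto (cat_comp Bto H G) F"
    by (auto elim!: arrow_cat_arrE simp: comp_assoc arr_simps)
qed

text \<open>The filler of \<open>(c, (t2, b2), a')\<close> over \<open>w\<close> is the pullback lift of \<open>t2\<close> and \<open>w \<cdot> c\<close>.\<close>
lemma pullback_square_cod_cartesian:
  assumes pb: "is_pullback B a' b t a"
  shows "is_cartesian Bto B (cod_obj B) cod_arr (a, (t, b), a')"
  unfolding is_cartesian_def
proof (intro conjI ballI impI)
  note P = pullbackD[OF pb]
  have a'b: "a' \<in> Ar" "b \<in> Ar" "cd a' = cd b" using pb unfolding is_pullback_def by auto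
  show "(a, (t, b), a') \<in> cat_arr Bto"
    using P a'b by (simp add: arrow_cat_arr_iff)
  fix G w assume G: "G \<in> cat_arr Bto" and cod_G: "cat_cod Bto G = cat_cod Bto (a, (t, b), a')"
    and w: "w \<in> Hom (cod_obj B (cat_dom Bto G)) (cod_obj B (cat_dom Bto (a, (t, b), a')))"
    and bw: "cod_arr (a, (t, b), a') \<cdot> w = cod_arr G"
  from G cod_G obtain c t2 b2 where G': "G = (c, (t2, b2), a')" "c \<in> Ar" "t2 \<in> Ar"
    "dm t2 = dm c" "cd t2 = dm a'" "b2 \<in> Ar" "dm b2 = cd c" "a' \<cdot> t2 = b2 \<cdot> c"
    by (auto elim!: arrow_cat_arrE)
  have w': "w \<in> Ar" "dm w = cd c" "cd w = cd a" "b \<cdot> w = b2" using w bw G' by (simp_all add: hom_def)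
  have "a' \<cdot> t2 = b \<cdot> (w \<cdot> c)" using G' w' P a'b by (simp add: comp_assoc)
  note S = pb_lift[OF pb G'(3) comp_arr[OF G'(2) w'(1)] _ G'(5) _ this]
  let ?s = "pb_lift t a t2 (w \<cdot> c)"
  let ?H = "(c, (?s, w), a)"
  show "\<exists>!H. H \<in> hom Bto (cat_dom Bto G) (cat_dom Bto (a, (t, b), a')) \<and>
          cod_arr H = w \<and> cat_comp Bto (a, (t, b), a') H = G"
  proof (rule ex1I[of _ ?H])
    show "?H \<in> hom Bto (cat_dom Bto G) (cat_dom Bto (a, (t, b), a')) \<and>
        cod_arr ?H = w \<and> cat_comp Bto (a, (t, b), a') ?H = G"
      using S G' w' P by (simp add: hom_def arrow_cat_arr_iff arr_simps)
  next
    fix H assume "H \<in> hom Bto (cat_dom Bto G) (cat_dom Bto (a, (t, b), a')) \<and>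
        cod_arr H = w \<and> cat_comp Bto (a, (t, b), a') H = G"
    then obtain s where H': "H = (c, (s, w), a)" "s \<in> Ar" "dm s = dm c" "cd s = dm a"
      "a \<cdot> s = w \<cdot> c" "t \<cdot> s = t2"
      using G' by (auto simp: hom_def elim!: arrow_cat_arrE)
    have "s = ?s"
      by (rule pullback_arr_eqI[OF pb]) (use S H' G' w' P in \<open>simp_all add: arr_simps\<close>)
    then show "H = ?H" using H' by simp
  qed
qed

end

section \<open>Internal categories and their externalization\<close>

locale internal_category = ambient_category B for B :: "('o, 'm) category" +
  fixes C :: "('o, 'm) internal_cat"
  assumes internal: "is_internal_category B C"
begin

abbreviation "C0 \<equiv> IC0 C"
abbreviation "C1 \<equiv> IC1 C"
abbreviation "C2 \<equiv> IC2 C"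
abbreviation "d0 \<equiv> Id0 C"
abbreviation "d1 \<equiv> Id1 C"
abbreviation "ii \<equiv> Iident C"
abbreviation "cc \<equiv> Icomp C"
abbreviation "p1 \<equiv> Ipi1 C"
abbreviation "p2 \<equiv> Ipi2 C"
abbreviation "mu \<equiv> ic_mult B C"

lemma composable_pullback: "is_pullback B d0 d1 p1 p2"
  using internal unfolding is_internal_category_def by blast

lemma structure_arrs:
  "d0 \<in> Ar" "dm d0 = C1" "cd d0 = C0" "d1 \<in> Ar" "dm d1 = C1" "cd d1 = C0"
  "ii \<in> Ar" "dm ii = C0" "cd ii = C1" "cc \<in> Ar" "dm cc = C2" "cd cc = C1"
  "p1 \<in> Ar" "dm p1 = C2" "cd p1 = C1" "p2 \<in> Ar" "dm p2 = C2" "cd p2 = C1"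
  "C0 \<in> Ob" "C1 \<in> Ob" "C2 \<in> Ob"
proof -
  have "d0 \<in> Hom C1 C0" "d1 \<in> Hom C1 C0" "ii \<in> Hom C0 C1" "cc \<in> Hom C2 C1" "dm p1 = C2"
    "C0 \<in> Ob" "C1 \<in> Ob"
    using internal unfolding is_internal_category_def by blast+
  moreover note pullbackD[OF composable_pullback]
  ultimately show "d0 \<in> Ar" "dm d0 = C1" "cd d0 = C0" "d1 \<in> Ar" "dm d1 = C1" "cd d1 = C0"
    "ii \<in> Ar" "dm ii = C0" "cd ii = C1" "cc \<in> Ar" "dm cc = C2" "cd cc = C1"
    "p1 \<in> Ar" "dm p1 = C2" "cd p1 = C1" "p2 \<in> Ar" "dm p2 = C2" "cd p2 = C1"
    "C0 \<in> Ob" "C1 \<in> Ob" "C2 \<in> Ob"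
    by (auto simp: hom_def dest: dom_obj)
qed

lemma structure_eqs:
  "d0 \<cdot> ii = ide C0" "d1 \<cdot> ii = ide C0" "d0 \<cdot> cc = d0 \<cdot> p2" "d1 \<cdot> cc = d1 \<cdot> p1"
  "d0 \<cdot> p1 = d1 \<cdot> p2"
  using internal composable_pullback unfolding is_internal_category_def is_pullback_def by auto

lemmas structure_simps = arr_simps structure_arrs structure_eqs
lemmas ic_simps = structure_simps comp_assoc

lemma ic_pair:
  assumes "g \<in> Ar" "cd g = C1" "f \<in> Ar" "cd f = C1" "dm g = dm f" "d0 \<cdot> g = d1 \<cdot> f"
  shows "ic_pair B C g f \<in> Ar" "dm (ic_pair B C g f) = dm f" "cd (ic_pair B C g f) = C2"
    "p1 \<cdot> ic_pair B C g f = g" "p2 \<cdot> ic_pair B C g f = f"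
proof -
  have "ic_pair B C g f = pb_lift p1 p2 g f"
    unfolding ic_pair_def pb_lift_def using assms structure_arrs by simp
  with pb_lift[OF composable_pullback, of g f] assms structure_arrs
  show "ic_pair B C g f \<in> Ar" "dm (ic_pair B C g f) = dm f" "cd (ic_pair B C g f) = C2"
    "p1 \<cdot> ic_pair B C g f = g" "p2 \<cdot> ic_pair B C g f = f"
    by simp_all
qed

lemma ic_mult_arr:
  assumes "g \<in> Ar" "cd g = C1" "f \<in> Ar" "cd f = C1" "dm g = dm f" "d0 \<cdot> g = d1 \<cdot> f"
  shows "mu g f \<in> Ar" "dm (mu g f) = dm f" "cd (mu g f) = C1"
    "d0 \<cdot> mu g f = d0 \<cdot> f" "d1 \<cdot> mu g f = d1 \<cdot> g"
proof -
  note P = ic_pair[OF assms]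
  show "mu g f \<in> Ar" "dm (mu g f) = dm f" "cd (mu g f) = C1"
    unfolding ic_mult_def using P structure_arrs by (auto simp: arr_simps)
  have "d0 \<cdot> mu g f = (d0 \<cdot> p2) \<cdot> ic_pair B C g f"
    unfolding ic_mult_def using P by (simp add: ic_simps)
  then show "d0 \<cdot> mu g f = d0 \<cdot> f" using P by (simp add: structure_simps flip: comp_assoc)
  have "d1 \<cdot> mu g f = (d1 \<cdot> p1) \<cdot> ic_pair B C g f"
    unfolding ic_mult_def using P by (simp add: ic_simps)
  then show "d1 \<cdot> mu g f = d1 \<cdot> g" using P by (simp add: structure_simps flip: comp_assoc)
qed

lemma ic_mult_comp_right:
  assumes "g \<in> Ar" "cd g = C1" "f \<in> Ar" "cd f = C1" "dm g = dm f" "d0 \<cdot> g = d1 \<cdot> f"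
    and "u \<in> Ar" "cd u = dm f"
  shows "mu (g \<cdot> u) (f \<cdot> u) = mu g f \<cdot> u"
proof -
  note P = ic_pair[OF assms(1-6)]
  have "ic_pair B C (g \<cdot> u) (f \<cdot> u) = pb_lift p1 p2 (g \<cdot> u) (f \<cdot> u)"
    unfolding ic_pair_def pb_lift_def using assms P by (simp add: arr_simps structure_arrs)
  also have "\<dots> = ic_pair B C g f \<cdot> u"
    by (rule pullback_arr_eqI[OF composable_pullback])
      (use pb_lift[OF composable_pullback, of "g \<cdot> u" "f \<cdot> u"] P assms in \<open>simp_all add: ic_simps\<close>)
  finally show ?thesis unfolding ic_mult_def using P assms by (simp add: ic_simps)
qed

lemma ic_mult_ident_left: "f \<in> Ar \<Longrightarrow> cd f = C1 \<Longrightarrow> mu (ii \<cdot> (d1 \<cdot> f)) f = f"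
  using internal unfolding is_internal_category_def by blast

lemma ic_mult_ident_right: "f \<in> Ar \<Longrightarrow> cd f = C1 \<Longrightarrow> mu f (ii \<cdot> (d0 \<cdot> f)) = f"
  using internal unfolding is_internal_category_def by blast

lemma ic_mult_assoc:
  "f \<in> Ar \<Longrightarrow> g \<in> Ar \<Longrightarrow> h \<in> Ar \<Longrightarrow> cd f = C1 \<Longrightarrow> cd g = C1 \<Longrightarrow> cd h = C1 \<Longrightarrow>
   dm f = dm g \<Longrightarrow> dm g = dm h \<Longrightarrow> d0 \<cdot> g = d1 \<cdot> f \<Longrightarrow> d0 \<cdot> h = d1 \<cdot> g \<Longrightarrow>
   mu (mu h g) f = mu h (mu g f)"
  using internal unfolding is_internal_category_def by blast

lemma ic_mult_cancel_left:
  assumes "g \<in> Ar" "f \<in> Ar" "h \<in> Ar" "cd g = C1" "cd f = C1" "cd h = C1"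
    and "dm g = dm f" "dm f = dm h" "d0 \<cdot> g = d1 \<cdot> f" "d0 \<cdot> f = d1 \<cdot> h"
    and inverse: "mu g f = ii \<cdot> (d0 \<cdot> f)"
  shows "mu g (mu f h) = h"
proof -
  have "mu g (mu f h) = mu (mu g f) h" by (rule ic_mult_assoc[symmetric]) (use assms in simp_all)
  also have "\<dots> = h" using inverse ic_mult_ident_left assms by simp
  finally show ?thesis .
qed

lemma ic_mult_inverse_comp_right:
  assumes "g \<in> Ar" "cd g = C1" "f \<in> Ar" "cd f = C1" "dm g = dm f" "d0 \<cdot> g = d1 \<cdot> f"
    and inverse: "mu g f = ii \<cdot> (d0 \<cdot> f)" and b: "b \<in> Ar" "cd b = dm f"
  shows "mu (g \<cdot> b) (f \<cdot> b) = ii \<cdot> (d0 \<cdot> (f \<cdot> b))"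
proof -
  have "mu (g \<cdot> b) (f \<cdot> b) = (ii \<cdot> (d0 \<cdot> f)) \<cdot> b"
    using ic_mult_comp_right[OF assms(1-6) b] inverse by simp
  also have "\<dots> = ii \<cdot> (d0 \<cdot> (f \<cdot> b))" using assms by (simp add: ic_simps)
  finally show ?thesis .
qed

definition fam_arr :: "'o \<Rightarrow> 'm \<Rightarrow> 'm \<Rightarrow> 'm \<Rightarrow> 'o \<Rightarrow> 'm \<Rightarrow> bool" where
  "fam_arr I X u f J Y \<longleftrightarrow>
     I \<in> Ob \<and> X \<in> Ar \<and> dm X = I \<and> cd X = C0 \<and> J \<in> Ob \<and> Y \<in> Ar \<and> dm Y = J \<and> cd Y = C0 \<and>
     u \<in> Ar \<and> dm u = I \<and> cd u = J \<and> f \<in> Ar \<and> dm f = I \<and> cd f = C1 \<and>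
     d0 \<cdot> f = X \<and> d1 \<cdot> f = Y \<cdot> u"

lemma fam_arrD:
  assumes "fam_arr I X u f J Y"
  shows "I \<in> Ob" "J \<in> Ob" "f \<in> Ar" "u \<in> Ar" "cd f = C1" "dm f = I" "dm u = I" "cd u = J"
    "d0 \<cdot> f = X" "d1 \<cdot> f = Y \<cdot> u" "X \<in> Ar" "Y \<in> Ar" "dm X = I" "dm Y = J" "cd Y = C0" "cd X = C0"
  using assms unfolding fam_arr_def by auto

abbreviation "FamC \<equiv> Fam B C"

lemma Fam_arr_iff:
  "F \<in> cat_arr FamC \<longleftrightarrow> (\<exists>I X u f J Y. F = ((I, X), (u, f), (J, Y)) \<and> fam_arr I X u f J Y)"
  unfolding Fam_def fam_arr_def hom_def by auto

lemma Fam_arrE: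
  assumes "F \<in> cat_arr FamC"
  obtains I X u f J Y where "F = ((I, X), (u, f), (J, Y))" "fam_arr I X u f J Y"
  using assms Fam_arr_iff by blast

lemma Fam_arrI: "fam_arr I X u f J Y \<Longrightarrow> ((I, X), (u, f), (J, Y)) \<in> cat_arr FamC"
  using Fam_arr_iff by blast

lemma Fam_obj_iff:
  "S \<in> cat_obj FamC \<longleftrightarrow> (\<exists>I X. S = (I, X) \<and> I \<in> Ob \<and> X \<in> Ar \<and> dm X = I \<and> cd X = C0)"
  unfolding Fam_def hom_def by auto

lemma Fam_simps [simp]:
  "cat_dom FamC (S, x, T) = S" "cat_cod FamC (S, x, T) = T"
  "cat_id FamC (I, X) = ((I, X), (ide I, ii \<cdot> X), (I, X))"
  "cat_comp FamC (S', (v, g), T) (S, (u, f), T') = (S, (v \<cdot> u, mu (g \<cdot> u) f), T)"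
  unfolding Fam_def by simp_all

lemma Fam_hom_iff:
  "H \<in> hom FamC (I, X) (J, Y) \<longleftrightarrow> (\<exists>u f. H = ((I, X), (u, f), (J, Y)) \<and> fam_arr I X u f J Y)"
  unfolding hom_def Fam_arr_iff by auto

lemma proj_simps [simp]: "proj_obj (I, X) = I" "proj_arr (S, (u, f), T) = u"
  by (simp_all add: proj_obj_def proj_arr_def)

lemma fam_arr_id:
  "I \<in> Ob \<Longrightarrow> X \<in> Ar \<Longrightarrow> dm X = I \<Longrightarrow> cd X = C0 \<Longrightarrow> fam_arr I X (ide I) (ii \<cdot> X) I X"
  unfolding fam_arr_def by (simp add: ic_simps)

lemma fam_arr_comp:
  assumes "fam_arr I X u f J Y" "fam_arr J Y v g K Z"
  shows "fam_arr I X (v \<cdot> u) (mu (g \<cdot> u) f) K Z"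
proof -
  note A = fam_arrD[OF assms(1)] and B = fam_arrD[OF assms(2)]
  have "d0 \<cdot> (g \<cdot> u) = d1 \<cdot> f" using A B by (simp add: ic_simps)
  note M = ic_mult_arr[of "g \<cdot> u" f, OF _ _ A(3,5) _ this]
  show ?thesis using A B M unfolding fam_arr_def by (simp add: ic_simps)
qed

lemma fam_arr_ident_left: "fam_arr I X u f J Y \<Longrightarrow> mu ((ii \<cdot> Y) \<cdot> u) f = f"
  unfolding fam_arr_def using ic_mult_ident_left[of f] by (simp add: ic_simps)

lemma fam_arr_ident_right: "fam_arr I X u f J Y \<Longrightarrow> mu (f \<cdot> ide I) (ii \<cdot> X) = f"
  unfolding fam_arr_def using ic_mult_ident_right[of f] by (simp add: ic_simps)

lemma fam_arr_assoc:
  assumes "fam_arr I X u f J Y" "fam_arr J Y v g K Z" "fam_arr K Z w h L W"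
  shows "mu (h \<cdot> (v \<cdot> u)) (mu (g \<cdot> u) f) = mu ((mu (h \<cdot> v) g) \<cdot> u) f"
proof -
  note A = fam_arrD[OF assms(1)] and B = fam_arrD[OF assms(2)] and D = fam_arrD[OF assms(3)]
  have "mu (h \<cdot> v) g \<cdot> u = mu ((h \<cdot> v) \<cdot> u) (g \<cdot> u)"
    by (rule ic_mult_comp_right[symmetric]) (use A B D in \<open>simp_all add: ic_simps\<close>)
  moreover have "mu (mu ((h \<cdot> v) \<cdot> u) (g \<cdot> u)) f = mu ((h \<cdot> v) \<cdot> u) (mu (g \<cdot> u) f)"
    by (rule ic_mult_assoc) (use A B D in \<open>simp_all add: ic_simps\<close>)
  ultimately show ?thesis using A B D by (simp add: ic_simps)
qed

lemma is_category_Fam: "is_category FamC"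
  unfolding is_category_def
proof (intro conjI ballI impI)
  fix F assume "F \<in> cat_arr FamC"
  then show "cat_dom FamC F \<in> cat_obj FamC" "cat_cod FamC F \<in> cat_obj FamC"
    by (auto elim!: Fam_arrE simp: Fam_obj_iff fam_arr_def)
next
  fix S assume "S \<in> cat_obj FamC"
  then show "cat_id FamC S \<in> hom FamC S S"
    by (auto simp: Fam_obj_iff Fam_hom_iff intro!: fam_arr_id)
next
  fix F G assume F: "F \<in> cat_arr FamC" and G: "G \<in> cat_arr FamC"
    and FG: "cat_cod FamC F = cat_dom FamC G"
  from F obtain I X u f J Y where F': "F = ((I, X), (u, f), (J, Y))" "fam_arr I X u f J Y"
    by (rule Fam_arrE)
  from G FG F' obtain v g K Z where "G = ((J, Y), (v, g), (K, Z))" "fam_arr J Y v g K Z"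
    by (auto elim!: Fam_arrE)
  with F' show "cat_comp FamC G F \<in> hom FamC (cat_dom FamC F) (cat_cod FamC G)"
    by (simp add: Fam_hom_iff fam_arr_comp)
next
  fix F assume "F \<in> cat_arr FamC"
  then obtain I X u f J Y where F': "F = ((I, X), (u, f), (J, Y))" "fam_arr I X u f J Y"
    by (rule Fam_arrE)
  then have "ide J \<cdot> u = u" "u \<cdot> ide I = u" unfolding fam_arr_def by (simp_all add: arr_simps)
  then show "cat_comp FamC (cat_id FamC (cat_cod FamC F)) F = F"
    "cat_comp FamC F (cat_id FamC (cat_dom FamC F)) = F"
    using F' fam_arr_ident_left fam_arr_ident_right by simp_all
next
  fix F G H assume F: "F \<in> cat_arr FamC" and G: "G \<in> cat_arr FamC" and H: "H \<in> cat_arr FamC"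
    and FG: "cat_cod FamC F = cat_dom FamC G" and GH: "cat_cod FamC G = cat_dom FamC H"
  from F obtain I X u f J Y where F': "F = ((I, X), (u, f), (J, Y))" "fam_arr I X u f J Y"
    by (rule Fam_arrE)
  from G FG F' obtain v g K Z where G': "G = ((J, Y), (v, g), (K, Z))" "fam_arr J Y v g K Z"
    by (auto elim!: Fam_arrE)
  from H GH G' obtain w h L W where H': "H = ((K, Z), (w, h), (L, W))" "fam_arr K Z w h L W"
    by (auto elim!: Fam_arrE)
  have "w \<cdot> (v \<cdot> u) = (w \<cdot> v) \<cdot> u"
    using F'(2) G'(2) H'(2) unfolding fam_arr_def by (simp add: comp_assoc)
  then show "cat_comp FamC H (cat_comp FamC G F) = cat_comp FamC (cat_comp FamC H G) F"
    using F' G' H' fam_arr_assoc[OF F'(2) G'(2) H'(2)] by simp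
qed

lemma proj_functor: "is_functor FamC B proj_obj proj_arr"
  unfolding is_functor_def
proof (intro conjI ballI impI is_category_Fam category)
  fix S assume "S \<in> cat_obj FamC"
  then show "proj_obj S \<in> Ob" "proj_arr (cat_id FamC S) = ide (proj_obj S)"
    by (auto simp: Fam_obj_iff)
next
  fix F assume "F \<in> cat_arr FamC"
  then show "proj_arr F \<in> Hom (proj_obj (cat_dom FamC F)) (proj_obj (cat_cod FamC F))"
    by (auto elim!: Fam_arrE simp: fam_arr_def hom_def)
next
  fix F G assume "F \<in> cat_arr FamC" "G \<in> cat_arr FamC"
  then show "proj_arr (cat_comp FamC G F) = proj_arr G \<cdot> proj_arr F"
    by (auto elim!: Fam_arrE)
qed

text \<open>A filler over \<open>w\<close> for \<open>(v, g)\<close> is \<open>(w, g)\<close> itself.\<close>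
lemma reindexing_cartesian:
  assumes Y: "Y \<in> Ar" "dm Y = J" "cd Y = C0" and u: "u \<in> Ar" "cd u = J"
  shows "is_cartesian FamC B proj_obj proj_arr ((dm u, Y \<cdot> u), (u, ii \<cdot> (Y \<cdot> u)), (J, Y))"
    (is "is_cartesian _ _ _ _ ?L")
  unfolding is_cartesian_def
proof (intro conjI ballI impI)
  let ?I = "dm u"
  show "?L \<in> cat_arr FamC"
    using Y u dom_obj[OF Y(1)] by (intro Fam_arrI) (simp add: fam_arr_def ic_simps)
  fix G w assume G: "G \<in> cat_arr FamC" and cod_G: "cat_cod FamC G = cat_cod FamC ?L"
    and w: "w \<in> Hom (proj_obj (cat_dom FamC G)) (proj_obj (cat_dom FamC ?L))"
    and uw: "proj_arr ?L \<cdot> w = proj_arr G"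
  from G cod_G obtain K Z v g where G': "G = ((K, Z), (v, g), (J, Y))" "fam_arr K Z v g J Y"
    by (auto elim!: Fam_arrE)
  note A = fam_arrD[OF G'(2)]
  from w uw G' have w': "w \<in> Ar" "dm w = K" "cd w = ?I" "u \<cdot> w = v" by (simp_all add: hom_def)
  have "d1 \<cdot> g = (Y \<cdot> u) \<cdot> w" using A w' Y u by (simp add: comp_assoc[symmetric])
  then have g_over_w: "fam_arr K Z w g ?I (Y \<cdot> u)"
    using A w' Y u unfolding fam_arr_def by (simp add: arr_simps)
  have unit: "mu ((ii \<cdot> (Y \<cdot> u)) \<cdot> w) h = h" if "fam_arr K Z w h ?I (Y \<cdot> u)" for h
    using fam_arr_ident_left[OF that] .
  let ?H = "((K, Z), (w, g), (?I, Y \<cdot> u))"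
  show "\<exists>!H. H \<in> hom FamC (cat_dom FamC G) (cat_dom FamC ?L) \<and> proj_arr H = w \<and>
          cat_comp FamC ?L H = G"
  proof (rule ex1I[of _ ?H])
    show "?H \<in> hom FamC (cat_dom FamC G) (cat_dom FamC ?L) \<and> proj_arr ?H = w \<and>
        cat_comp FamC ?L ?H = G"
      using g_over_w unit[OF g_over_w] G' w' by (simp add: Fam_hom_iff)
  next
    fix H assume "H \<in> hom FamC (cat_dom FamC G) (cat_dom FamC ?L) \<and> proj_arr H = w \<and>
        cat_comp FamC ?L H = G"
    then obtain h where "H = ((K, Z), (w, h), (?I, Y \<cdot> u))" "fam_arr K Z w h ?I (Y \<cdot> u)"
      "mu ((ii \<cdot> (Y \<cdot> u)) \<cdot> w) h = g"
      using G' by (auto simp: Fam_hom_iff)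
    then show "H = ?H" using unit by simp
  qed
qed

lemma proj_fibration: "is_fibration FamC B proj_obj proj_arr"
  unfolding is_fibration_def
proof (intro conjI ballI impI proj_functor)
  fix S u assume S: "S \<in> cat_obj FamC" and u: "u \<in> Ar" "cd u = proj_obj S"
  from S obtain J Y where S': "S = (J, Y)" "Y \<in> Ar" "dm Y = J" "cd Y = C0"
    by (auto simp: Fam_obj_iff)
  let ?L = "((dm u, Y \<cdot> u), (u, ii \<cdot> (Y \<cdot> u)), (J, Y))"
  have "is_cartesian FamC B proj_obj proj_arr ?L"
    using reindexing_cartesian[OF S'(2-4) u(1)] S' u by simp
  moreover from this have "?L \<in> cat_arr FamC" unfolding is_cartesian_def by blast
  ultimately show "\<exists>f\<in>cat_arr FamC. cat_cod FamC f = S \<and> proj_arr f = u \<and>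
      is_cartesian FamC B proj_obj proj_arr f"
    using S' by (intro bexI[of _ ?L]) simp_all
qed

text \<open>Comparing a cartesian \<open>(u, f)\<close> with the cartesian lift \<open>(u, ii \<cdot> Y \<cdot> u)\<close> shows that \<open>f\<close>
  is pointwise invertible in \<open>C\<close>: the vertical comparison arrow \<open>f'\<close> is its inverse, where
  \<open>f' \<circ> f = id\<close> holds because \<open>(u, f)\<close> factors uniquely through itself over \<open>ide I\<close>.\<close>
lemma cartesian_fam_arr_invertible:
  assumes F: "fam_arr I X u f J Y"
    and cart: "is_cartesian FamC B proj_obj proj_arr ((I, X), (u, f), (J, Y))"
  obtains f' where "fam_arr I (Y \<cdot> u) (ide I) f' I X" "mu f f' = ii \<cdot> (Y \<cdot> u)" "mu f' f = ii \<cdot> X"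
proof -
  note A = fam_arrD[OF F]
  let ?F = "((I, X), (u, f), (J, Y))"
  let ?L = "((I, Y \<cdot> u), (u, ii \<cdot> (Y \<cdot> u)), (J, Y))"
  have L: "?L \<in> cat_arr FamC" using A by (intro Fam_arrI) (simp add: fam_arr_def ic_simps)
  have idI: "ide I \<in> Hom I I" "u \<cdot> ide I = u" "f \<cdot> ide I = f" using A by (simp_all add: hom_def arr_simps)
  have "\<exists>!H. H \<in> hom FamC (I, Y \<cdot> u) (I, X) \<and> proj_arr H = ide I \<and> cat_comp FamC ?F H = ?L"
    using is_cartesianD[OF cart L, of "ide I"] idI by simp
  then obtain H where H: "H \<in> hom FamC (I, Y \<cdot> u) (I, X)" "proj_arr H = ide I"
    "cat_comp FamC ?F H = ?L"
    by blast
  then obtain w f' where "H = ((I, Y \<cdot> u), (w, f'), (I, X))" "fam_arr I (Y \<cdot> u) w f' I X"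
    by (auto simp: Fam_hom_iff)
  with H idI have f': "fam_arr I (Y \<cdot> u) (ide I) f' I X" and ff': "mu f f' = ii \<cdot> (Y \<cdot> u)"
    by simp_all
  note B = fam_arrD[OF f']
  have f'f: "fam_arr I X (ide I) (mu f' f) I X"
    using ic_mult_arr[OF B(3,5) A(3,5)] A B unfolding fam_arr_def by simp
  have "mu f (mu f' f) = f"
    by (rule ic_mult_cancel_left) (use A B ff' in \<open>simp_all add: arr_simps\<close>)
  then have "((I, X), (ide I, mu f' f), (I, X)) \<in> hom FamC (I, X) (I, X) \<and>
      proj_arr ((I, X), (ide I, mu f' f), (I, X)) = ide I \<and>
      cat_comp FamC ?F ((I, X), (ide I, mu f' f), (I, X)) = ?F"
    using f'f idI by (simp add: Fam_hom_iff)
  moreover have "((I, X), (ide I, ii \<cdot> X), (I, X)) \<in> hom FamC (I, X) (I, X) \<and>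
      proj_arr ((I, X), (ide I, ii \<cdot> X), (I, X)) = ide I \<and>
      cat_comp FamC ?F ((I, X), (ide I, ii \<cdot> X), (I, X)) = ?F"
    using fam_arr_id[OF A(1,11,13,16)] fam_arr_ident_right[OF F] idI by (simp add: Fam_hom_iff)
  moreover have "\<exists>!H. H \<in> hom FamC (I, X) (I, X) \<and> proj_arr H = ide I \<and> cat_comp FamC ?F H = ?F"
    using is_cartesianD[OF cart Fam_arrI[OF F], of "ide I"] idI by simp
  ultimately have "((I, X), (ide I, mu f' f), (I, X)) = ((I, X), (ide I, ii \<cdot> X), (I, X))"
    unfolding Ex1_def by blast
  then have "mu f' f = ii \<cdot> X" by simp
  with f' ff' show thesis by (rule that)
qed

end

section \<open>The carrier functor\<close>

locale externalization = internal_category B C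
  for B :: "('o, 'm) category" and C :: "('o, 'm) internal_cat" +
  assumes finite_limits: "has_finite_limits B"
begin

text \<open>The chosen pullback of \<open>X\<close> along \<open>d1\<close> is the carrier \<open>|(I, X)|\<close>.\<close>
definition tot_pb :: "'m \<Rightarrow> 'm \<times> 'm" where
  "tot_pb X = (SOME pq. is_pullback B X d1 (fst pq) (snd pq))"

definition tot_proj :: "'m \<Rightarrow> 'm" where "tot_proj X = fst (tot_pb X)"

definition tot_elem :: "'m \<Rightarrow> 'm" where "tot_elem X = snd (tot_pb X)"

lemma tot_pullback:
  assumes "X \<in> Ar" "cd X = C0"
  shows "is_pullback B X d1 (tot_proj X) (tot_elem X)"
proof -
  have "\<exists>p q. is_pullback B X d1 p q"
    using finite_limits assms structure_arrs unfolding has_finite_limits_def by auto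
  then have "\<exists>pq. is_pullback B X d1 (fst pq) (snd pq)" by auto
  from someI_ex[OF this] show ?thesis unfolding tot_proj_def tot_elem_def tot_pb_def .
qed

lemma tot_arrs:
  assumes "X \<in> Ar" "cd X = C0"
  shows "tot_proj X \<in> Ar" "tot_elem X \<in> Ar" "dm (tot_elem X) = dm (tot_proj X)"
    "cd (tot_proj X) = dm X" "cd (tot_elem X) = C1" "X \<cdot> tot_proj X = d1 \<cdot> tot_elem X"
  using pullbackD[OF tot_pullback[OF assms]] structure_arrs by auto

text \<open>The top of the square \<open>U (u, f)\<close>: \<open>(i, a) \<mapsto> (u i, f i \<circ> a)\<close>.\<close>
definition tot_map :: "'m \<Rightarrow> 'm \<Rightarrow> 'm \<Rightarrow> 'm \<Rightarrow> 'm" where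
  "tot_map X Y u f =
     pb_lift (tot_proj Y) (tot_elem Y) (u \<cdot> tot_proj X) (mu (f \<cdot> tot_proj X) (tot_elem X))"

lemma tot_map:
  assumes F: "fam_arr I X u f J Y"
  shows "tot_map X Y u f \<in> Ar" "dm (tot_map X Y u f) = dm (tot_proj X)"
    "cd (tot_map X Y u f) = dm (tot_proj Y)"
    "tot_proj Y \<cdot> tot_map X Y u f = u \<cdot> tot_proj X"
    "tot_elem Y \<cdot> tot_map X Y u f = mu (f \<cdot> tot_proj X) (tot_elem X)"
proof -
  note A = fam_arrD[OF F]
  note PX = tot_arrs[OF A(11,16)] and PY = tot_arrs[OF A(12,15)]
  have "d0 \<cdot> (f \<cdot> tot_proj X) = d1 \<cdot> tot_elem X" using A PX by (simp add: ic_simps)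
  note M = ic_mult_arr[OF _ _ PX(2,5) _ this]
  have "Y \<cdot> (u \<cdot> tot_proj X) = d1 \<cdot> (f \<cdot> tot_proj X)"
    using A PX by (simp add: ic_simps)
  also have "\<dots> = d1 \<cdot> mu (f \<cdot> tot_proj X) (tot_elem X)"
    using M A PX by (simp add: arr_simps)
  finally have "Y \<cdot> (u \<cdot> tot_proj X) = d1 \<cdot> mu (f \<cdot> tot_proj X) (tot_elem X)" .
  note L = pb_lift[OF tot_pullback[OF A(12,15)] _ _ _ _ _ this]
  show "tot_map X Y u f \<in> Ar" "dm (tot_map X Y u f) = dm (tot_proj X)"
    "cd (tot_map X Y u f) = dm (tot_proj Y)"
    "tot_proj Y \<cdot> tot_map X Y u f = u \<cdot> tot_proj X"
    "tot_elem Y \<cdot> tot_map X Y u f = mu (f \<cdot> tot_proj X) (tot_elem X)"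
    unfolding tot_map_def using L M A PX PY structure_arrs by (simp_all add: arr_simps)
qed

lemma tot_map_precomp:
  assumes F: "fam_arr I X u f J Y" and s: "s \<in> Ar" "cd s = dm (tot_proj X)"
  shows "tot_proj Y \<cdot> (tot_map X Y u f \<cdot> s) = u \<cdot> (tot_proj X \<cdot> s)"
    "tot_elem Y \<cdot> (tot_map X Y u f \<cdot> s) = mu (f \<cdot> (tot_proj X \<cdot> s)) (tot_elem X \<cdot> s)"
proof -
  note A = fam_arrD[OF F] and T = tot_map[OF F]
  note PX = tot_arrs[OF A(11,16)] and PY = tot_arrs[OF A(12,15)]
  show "tot_proj Y \<cdot> (tot_map X Y u f \<cdot> s) = u \<cdot> (tot_proj X \<cdot> s)"
    using T A PX PY s by (simp add: comp_assoc)
  have "d0 \<cdot> (f \<cdot> tot_proj X) = d1 \<cdot> tot_elem X" using A PX by (simp add: ic_simps)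
  then have "mu (f \<cdot> tot_proj X) (tot_elem X) \<cdot> s = mu ((f \<cdot> tot_proj X) \<cdot> s) (tot_elem X \<cdot> s)"
    by (intro ic_mult_comp_right[symmetric]) (use A PX s in \<open>simp_all add: arr_simps\<close>)
  then show "tot_elem Y \<cdot> (tot_map X Y u f \<cdot> s) = mu (f \<cdot> (tot_proj X \<cdot> s)) (tot_elem X \<cdot> s)"
    using T A PX PY s by (simp add: comp_assoc)
qed

lemma tot_map_id:
  assumes X: "X \<in> Ar" "cd X = C0" "dm X = I"
  shows "tot_map X X (ide I) (ii \<cdot> X) = ide (dm (tot_proj X))"
proof -
  have I: "I \<in> Ob" using dom_obj[OF X(1)] X by simp
  note T = tot_map[OF fam_arr_id[OF I X(1,3,2)]] and PX = tot_arrs[OF X(1,2)]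
  have "(ii \<cdot> X) \<cdot> tot_proj X = ii \<cdot> (X \<cdot> tot_proj X)"
    by (rule comp_assoc[symmetric]) (use X PX structure_arrs in simp_all)
  also have "\<dots> = ii \<cdot> (d1 \<cdot> tot_elem X)" using PX(6) by simp
  finally have elem: "tot_elem X \<cdot> tot_map X X (ide I) (ii \<cdot> X) = tot_elem X"
    using T(5) ic_mult_ident_left[OF PX(2,5)] by simp
  show ?thesis
    by (rule pullback_arr_eqI[OF tot_pullback[OF X(1,2)]])
      (use elem T PX X in \<open>simp_all add: arr_simps\<close>)
qed

lemma tot_map_comp:
  assumes F: "fam_arr I X u f J Y" and G: "fam_arr J Y v g K Z"
  shows "tot_map X Z (v \<cdot> u) (mu (g \<cdot> u) f) = tot_map Y Z v g \<cdot> tot_map X Y u f"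
proof -
  note A = fam_arrD[OF F] and B = fam_arrD[OF G]
  note T1 = tot_map[OF F] and T3 = tot_map[OF fam_arr_comp[OF F G]]
  note PX = tot_arrs[OF A(11,16)] and PZ = tot_arrs[OF B(12,15)]
  note GT1 = tot_map_precomp[OF G T1(1,3)]
  have gu: "d0 \<cdot> ((g \<cdot> u) \<cdot> tot_proj X) = d1 \<cdot> (f \<cdot> tot_proj X)"
    using A B PX by (simp add: ic_simps)
  have "d0 \<cdot> (f \<cdot> tot_proj X) = d1 \<cdot> tot_elem X" using A PX by (simp add: ic_simps)
  then have "tot_elem Z \<cdot> (tot_map Y Z v g \<cdot> tot_map X Y u f)
      = mu (mu ((g \<cdot> u) \<cdot> tot_proj X) (f \<cdot> tot_proj X)) (tot_elem X)"
    using GT1 T1 A B PX gu by (simp add: ic_mult_assoc ic_simps)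
  also have "mu ((g \<cdot> u) \<cdot> tot_proj X) (f \<cdot> tot_proj X) = mu (g \<cdot> u) f \<cdot> tot_proj X"
    by (rule ic_mult_comp_right) (use A B PX in \<open>simp_all add: ic_simps\<close>)
  finally have elem: "tot_elem Z \<cdot> (tot_map Y Z v g \<cdot> tot_map X Y u f) =
      tot_elem Z \<cdot> tot_map X Z (v \<cdot> u) (mu (g \<cdot> u) f)"
    using T3 by simp
  have proj: "tot_proj Z \<cdot> (tot_map Y Z v g \<cdot> tot_map X Y u f) =
      tot_proj Z \<cdot> tot_map X Z (v \<cdot> u) (mu (g \<cdot> u) f)"
    using GT1 T1 T3 A B PX by (simp add: comp_assoc)
  show ?thesis
    by (rule pullback_arr_eqI[OF tot_pullback[OF B(12,15)]])
      (use elem proj T1 T3 tot_map[OF G] in \<open>simp_all add: arr_simps\<close>)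
qed

text \<open>\<open>pb_lift (tot_proj X) (tot_elem X) (ide I) (ii \<cdot> X)\<close> is the section \<open>i \<mapsto> (i, id (X i))\<close>.\<close>
lemma tot_map_at_identities:
  assumes F: "fam_arr I X u f J Y"
  shows "tot_elem Y \<cdot> (tot_map X Y u f \<cdot> pb_lift (tot_proj X) (tot_elem X) (ide I) (ii \<cdot> X)) = f"
proof -
  note A = fam_arrD[OF F] and PX = tot_arrs[OF A(11,16)]
  have "X \<cdot> ide I = d1 \<cdot> (ii \<cdot> X)" using A by (simp add: ic_simps)
  note S = pb_lift[OF tot_pullback[OF A(11,16)] _ _ _ _ _ this, simplified A arr_simps structure_arrs]
  show ?thesis
    using tot_map_precomp(2)[OF F S(1,3)] S(4,5) fam_arr_ident_right[OF F] A
    by (simp add: arr_simps structure_arrs)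
qed

lemma tot_elem_comp:
  assumes X: "X \<in> Ar" "cd X = C0" and a: "a \<in> Ar" "cd a = dm (tot_proj X)"
  shows "tot_elem X \<cdot> a \<in> Ar" "cd (tot_elem X \<cdot> a) = C1" "dm (tot_elem X \<cdot> a) = dm a"
    "d1 \<cdot> (tot_elem X \<cdot> a) = X \<cdot> (tot_proj X \<cdot> a)"
proof -
  note PX = tot_arrs[OF X]
  show "tot_elem X \<cdot> a \<in> Ar" "cd (tot_elem X \<cdot> a) = C1" "dm (tot_elem X \<cdot> a) = dm a"
    using PX a by (simp_all add: arr_simps)
  have "d1 \<cdot> (tot_elem X \<cdot> a) = (d1 \<cdot> tot_elem X) \<cdot> a"
    by (rule comp_assoc) (use a PX structure_arrs in simp_all)
  also have "\<dots> = X \<cdot> (tot_proj X \<cdot> a)"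
    by (simp only: PX(6)[symmetric], rule comp_assoc[symmetric]) (use a PX X in simp_all)
  finally show "d1 \<cdot> (tot_elem X \<cdot> a) = X \<cdot> (tot_proj X \<cdot> a)" .
qed

lemma fam_arr_inverse_cancel:
  assumes F: "fam_arr I X u f J Y" and f': "fam_arr I (Y \<cdot> u) (ide I) f' I X"
    and inverse: "mu f f' = ii \<cdot> (Y \<cdot> u)" "mu f' f = ii \<cdot> X"
    and b: "b \<in> Ar" "cd b = I" and e: "e \<in> Ar" "cd e = C1" "dm e = dm b"
  shows "d1 \<cdot> e = (Y \<cdot> u) \<cdot> b \<Longrightarrow> mu (f \<cdot> b) (mu (f' \<cdot> b) e) = e"
    and "d1 \<cdot> e = X \<cdot> b \<Longrightarrow> mu (f' \<cdot> b) (mu (f \<cdot> b) e) = e"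
proof -
  note A = fam_arrD[OF F] and A' = fam_arrD[OF f']
  have fb: "f \<cdot> b \<in> Ar" "cd (f \<cdot> b) = C1" "dm (f \<cdot> b) = dm b" "f' \<cdot> b \<in> Ar" "cd (f' \<cdot> b) = C1"
    "dm (f' \<cdot> b) = dm b" "d0 \<cdot> (f \<cdot> b) = X \<cdot> b" "d1 \<cdot> (f \<cdot> b) = (Y \<cdot> u) \<cdot> b"
    "d0 \<cdot> (f' \<cdot> b) = (Y \<cdot> u) \<cdot> b" "d1 \<cdot> (f' \<cdot> b) = X \<cdot> b"
    using A A' b by (simp_all add: ic_simps)
  have inv_b: "mu (f \<cdot> b) (f' \<cdot> b) = ii \<cdot> (d0 \<cdot> (f' \<cdot> b))"
    "mu (f' \<cdot> b) (f \<cdot> b) = ii \<cdot> (d0 \<cdot> (f \<cdot> b))"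
    by (rule ic_mult_inverse_comp_right; use A A' b inverse in \<open>simp add: arr_simps\<close>)+
  show "mu (f \<cdot> b) (mu (f' \<cdot> b) e) = e" if "d1 \<cdot> e = (Y \<cdot> u) \<cdot> b"
    by (rule ic_mult_cancel_left) (use fb e inv_b that in simp_all)
  show "mu (f' \<cdot> b) (mu (f \<cdot> b) e) = e" if "d1 \<cdot> e = X \<cdot> b"
    by (rule ic_mult_cancel_left) (use fb e inv_b that in simp_all)
qed

text \<open>If \<open>f\<close> is pointwise invertible, \<open>(i, a) \<mapsto> (u i, f i \<circ> a)\<close> is a bijection on fibres over
  each \<open>i\<close>, with inverse \<open>(u i, e) \<mapsto> (i, f' i \<circ> e)\<close>; so the square \<open>U (u, f)\<close> is a pullback.\<close>
lemma tot_map_pullback: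
  assumes F: "fam_arr I X u f J Y" and f': "fam_arr I (Y \<cdot> u) (ide I) f' I X"
    and inverse: "mu f f' = ii \<cdot> (Y \<cdot> u)" "mu f' f = ii \<cdot> X"
  shows "is_pullback B (tot_proj Y) u (tot_map X Y u f) (tot_proj X)"
  unfolding is_pullback_def
proof (intro conjI ballI impI)
  note A = fam_arrD[OF F] and A' = fam_arrD[OF f'] and T = tot_map[OF F]
  note PX = tot_arrs[OF A(11,16)] and PY = tot_arrs[OF A(12,15)]
  note cancel = fam_arr_inverse_cancel[OF F f' inverse]
  show "tot_proj Y \<in> Ar" "u \<in> Ar" "tot_map X Y u f \<in> Ar" "tot_proj X \<in> Ar"
    "cd (tot_proj Y) = cd u" "dm (tot_map X Y u f) = dm (tot_proj X)"
    "cd (tot_map X Y u f) = dm (tot_proj Y)" "cd (tot_proj X) = dm u"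
    "tot_proj Y \<cdot> tot_map X Y u f = u \<cdot> tot_proj X"
    using T PX PY A by simp_all
  fix a b assume a: "a \<in> Ar" and b: "b \<in> Ar" and ab: "dm a = dm b" "cd a = dm (tot_proj Y)"
    "cd b = dm u" "tot_proj Y \<cdot> a = u \<cdot> b"
  let ?e = "tot_elem Y \<cdot> a"
  let ?k = "mu (f' \<cdot> b) ?e"
  note e = tot_elem_comp[OF A(12,15) a(1) ab(2)]
  have d1e: "d1 \<cdot> ?e = (Y \<cdot> u) \<cdot> b" using e(4) ab A b by (simp add: comp_assoc)
  have k: "?k \<in> Ar" "cd ?k = C1" "dm ?k = dm b" "X \<cdot> b = d1 \<cdot> ?k"
    using ic_mult_arr[of "f' \<cdot> b" ?e] A A' b e d1e ab by (simp_all add: ic_simps)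
  let ?s = "pb_lift (tot_proj X) (tot_elem X) b ?k"
  have s: "?s \<in> Ar" "dm ?s = dm b" "cd ?s = dm (tot_proj X)" "tot_proj X \<cdot> ?s = b"
    "tot_elem X \<cdot> ?s = ?k"
    using pb_lift[OF tot_pullback[OF A(11,16)] b k(1) k(3)[symmetric] _ _ k(4)] ab A k structure_arrs
    by simp_all
  show "\<exists>!h. h \<in> Hom (dm a) (dm (tot_map X Y u f)) \<and> tot_map X Y u f \<cdot> h = a \<and> tot_proj X \<cdot> h = b"
  proof (rule ex1I[of _ ?s])
    have elem: "tot_elem Y \<cdot> (tot_map X Y u f \<cdot> ?s) = tot_elem Y \<cdot> a"
      using tot_map_precomp(2)[OF F s(1,3)] s cancel(1)[of b ?e] b e A ab d1e by simp
    have proj: "tot_proj Y \<cdot> (tot_map X Y u f \<cdot> ?s) = tot_proj Y \<cdot> a"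
      using tot_map_precomp(1)[OF F s(1,3)] s ab by simp
    have "tot_map X Y u f \<cdot> ?s = a"
      by (rule pullback_arr_eqI[OF tot_pullback[OF A(12,15)]])
        (use elem proj T s a ab in \<open>simp_all add: arr_simps\<close>)
    moreover have "?s \<in> Hom (dm a) (dm (tot_map X Y u f))" using s T ab by (simp add: hom_def)
    ultimately show "?s \<in> Hom (dm a) (dm (tot_map X Y u f)) \<and> tot_map X Y u f \<cdot> ?s = a \<and>
        tot_proj X \<cdot> ?s = b"
      using s(4) by blast
  next
    fix h assume "h \<in> Hom (dm a) (dm (tot_map X Y u f)) \<and> tot_map X Y u f \<cdot> h = a \<and>
        tot_proj X \<cdot> h = b"
    then have h: "h \<in> Hom (dm a) (dm (tot_map X Y u f))" "tot_map X Y u f \<cdot> h = a"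
      "tot_proj X \<cdot> h = b"
      by blast+
    have h': "h \<in> Ar" "dm h = dm b" "cd h = dm (tot_proj X)"
      using h(1) T(2) ab(1) by (simp_all add: hom_def)
    note eh = tot_elem_comp[OF A(11,16) h'(1,3)]
    have "?e = mu (f \<cdot> b) (tot_elem X \<cdot> h)"
      using tot_map_precomp(2)[OF F h'(1,3)] h(2,3) by simp
    then have elem: "?k = tot_elem X \<cdot> h"
      using cancel(2)[of b "tot_elem X \<cdot> h"] b ab(3) eh h(3) h'(2) A by simp
    show "h = ?s"
      by (rule pullback_arr_eqI[OF tot_pullback[OF A(11,16)]]) (use elem h(3) h' s in simp_all)
  qed
qed

definition U_obj :: "'o \<times> 'm \<Rightarrow> 'm" where
  "U_obj S = tot_proj (snd S)"

definition U_arr :: "('o \<times> 'm) \<times> ('m \<times> 'm) \<times> ('o \<times> 'm) \<Rightarrow> 'm \<times> ('m \<times> 'm) \<times> 'm" where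
  "U_arr F = (case F of (S, (u, f), T) \<Rightarrow>
     (tot_proj (snd S), (tot_map (snd S) (snd T) u f, u), tot_proj (snd T)))"

lemma U_arr_simp [simp]:
  "U_arr ((I, X), (u, f), (J, Y)) = (tot_proj X, (tot_map X Y u f, u), tot_proj Y)"
  unfolding U_arr_def by simp

lemma U_functor: "is_functor FamC Bto U_obj U_arr"
  unfolding is_functor_def
proof (intro conjI ballI impI is_category_Fam is_category_arrow_cat)
  fix S assume "S \<in> cat_obj FamC"
  then obtain I X where S: "S = (I, X)" "X \<in> Ar" "dm X = I" "cd X = C0"
    by (auto simp: Fam_obj_iff)
  then show "U_obj S \<in> cat_obj Bto" by (simp add: U_obj_def tot_arrs)
  show "U_arr (cat_id FamC S) = cat_id Bto (U_obj S)"
    using S tot_map_id[OF S(2,4,3)] tot_arrs[OF S(2,4)] by (simp add: U_obj_def)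
next
  fix F assume "F \<in> cat_arr FamC"
  then obtain I X u f J Y where F: "F = ((I, X), (u, f), (J, Y))" "fam_arr I X u f J Y"
    by (rule Fam_arrE)
  note A = fam_arrD[OF F(2)]
  have "U_arr F \<in> cat_arr Bto"
    using F tot_map[OF F(2)] tot_arrs[OF A(11,16)] tot_arrs[OF A(12,15)] A
    by (simp add: arrow_cat_arr_iff)
  then show "U_arr F \<in> hom Bto (U_obj (cat_dom FamC F)) (U_obj (cat_cod FamC F))"
    using F by (simp add: hom_def U_obj_def)
next
  fix F G assume F: "F \<in> cat_arr FamC" and G: "G \<in> cat_arr FamC"
    and FG: "cat_cod FamC F = cat_dom FamC G"
  from F obtain I X u f J Y where F': "F = ((I, X), (u, f), (J, Y))" "fam_arr I X u f J Y"
    by (rule Fam_arrE)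
  from G FG F' obtain v g K Z where "G = ((J, Y), (v, g), (K, Z))" "fam_arr J Y v g K Z"
    by (auto elim!: Fam_arrE)
  with F' show "U_arr (cat_comp FamC G F) = cat_comp Bto (U_arr G) (U_arr F)"
    using tot_map_comp by simp
qed

lemma U_faithful: "faithful FamC U_arr"
  unfolding faithful_def
proof (intro ballI impI)
  fix F G assume F: "F \<in> cat_arr FamC" and G: "G \<in> cat_arr FamC"
    and same: "cat_dom FamC F = cat_dom FamC G" "cat_cod FamC F = cat_cod FamC G"
    and U_eq: "U_arr F = U_arr G"
  from F obtain I X u f J Y where F': "F = ((I, X), (u, f), (J, Y))" "fam_arr I X u f J Y"
    by (rule Fam_arrE)
  from G same F' obtain u' f' where G': "G = ((I, X), (u', f'), (J, Y))" "fam_arr I X u' f' J Y"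
    by (auto elim!: Fam_arrE)
  from U_eq F' G' have u: "u' = u" by simp
  with U_eq F' G' have "tot_map X Y u f = tot_map X Y u f'" by simp
  then have "f = f'"
    using tot_map_at_identities[OF F'(2)] tot_map_at_identities[of I X u f' J Y] G'(2) u by simp
  with F' G' u show "F = G" by simp
qed

lemma U_preserves_cartesian:
  assumes F: "F \<in> cat_arr FamC" and cart: "is_cartesian FamC B proj_obj proj_arr F"
  shows "is_cartesian Bto B (cod_obj B) cod_arr (U_arr F)"
proof -
  from F obtain I X u f J Y where F': "F = ((I, X), (u, f), (J, Y))" "fam_arr I X u f J Y"
    by (rule Fam_arrE)
  obtain f' where "fam_arr I (Y \<cdot> u) (ide I) f' I X" "mu f f' = ii \<cdot> (Y \<cdot> u)" "mu f' f = ii \<cdot> X"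
    using cartesian_fam_arr_invertible[OF F'(2)] cart F'(1) by blast
  from tot_map_pullback[OF F'(2) this] show ?thesis
    using F'(1) by (simp add: pullback_square_cod_cartesian)
qed

end

theorem proposition21:
  fixes B :: "('o, 'm) category" and C :: "('o, 'm) internal_cat"
  assumes "is_category B"
    and "has_finite_limits B"
    and "is_internal_category B C"
  shows "is_concrete_fibration B (\<lambda>_. True) (Fam B C) proj_obj proj_arr"
proof -
  interpret externalization B C
    using assms by unfold_locales
  have "\<forall>S \<in> cat_obj (Fam B C). cod_obj B (U_obj S) = proj_obj S"
    by (auto simp: Fam_obj_iff U_obj_def tot_arrs)
  moreover have "\<forall>F \<in> cat_arr (Fam B C). cod_arr (U_arr F) = proj_arr F"
    by (auto elim!: Fam_arrE)
  ultimately show ?thesis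
    unfolding is_concrete_fibration_def
    using proj_fibration U_functor U_faithful U_preserves_cartesian by blast
qed

end
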